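(* Let $\mathbb{K}$ be a field of characteristic not $2$, $p\geq 1$, $\lambda,\mu\in\mathbb{K}$, and $f:M_{1,p}(\mathbb{K})\to\mathbb{K}$, $g:M_{p,1}(\mathbb{K})\to\mathbb{K}$ linear forms. Suppose that for every $L\in M_{1,p}(\mathbb{K})$ and $C\in M_{p,1}(\mathbb{K})$, the matrix $$M_{L,C}=\begin{bmatrix}0&L&0\\ \mu C&0_{p\times p}&C\\ f(L)+g(C)&\lambda L&0\end{bmatrix}\in M_{p+2}(\mathbb{K})$$ has at most two distinct eigenvalues in $\overline{\mathbb{K}}$. Then $\lambda+\mu=0$. If moreover $\mathbb{K}$ has characteristic not $3$, then also $f=0$ and $g=0$.
   Context: $\overline{\mathbb{K}}$ is an algebraic closure of $\mathbb{K}$. *)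

theory Defs
  imports "HOL-Algebra.Algebraic_Closure_Type" "Jordan_Normal_Form.Char_Poly"
begin

definition linear_form_mat :: "nat \<Rightarrow> nat \<Rightarrow> ('a::field mat \<Rightarrow> 'a) \<Rightarrow> bool" where
  "linear_form_mat r s h \<longleftrightarrow>
     (\<forall>A\<in>carrier_mat r s. \<forall>B\<in>carrier_mat r s. h (A + B) = h A + h B) \<and>
     (\<forall>c. \<forall>A\<in>carrier_mat r s. h (c \<cdot>\<^sub>m A) = c * h A)"

text \<open>The (p+2) x (p+2) block matrix
  [[0, L, 0], [mu C, 0_{p x p}, C], [f L + g C, lambda L, 0]],
  with L a 1 x p row and C a p x 1 column; indices 0 .. p+1.\<close>
definition MLC :: "'a::field \<Rightarrow> 'a \<Rightarrow> ('a mat \<Rightarrow> 'a) \<Rightarrow> ('a mat \<Rightarrow> 'a) \<Rightarrow> nat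
    \<Rightarrow> 'a mat \<Rightarrow> 'a mat \<Rightarrow> 'a mat" where
  "MLC lam mu f g p L C = mat (p + 2) (p + 2) (\<lambda>(i, j).
     if i = 0 then (if 1 \<le> j \<and> j \<le> p then L $$ (0, j - 1) else 0)
     else if i \<le> p then
       (if j = 0 then mu * C $$ (i - 1, 0) else if j = p + 1 then C $$ (i - 1, 0) else 0)
     else (if j = 0 then f L + g C else if j \<le> p then lam * L $$ (0, j - 1) else 0))"

definition eigenvalues_ac :: "'a::field mat \<Rightarrow> 'a alg_closure set" where
  "eigenvalues_ac A = {k. eigenvalue (map_mat to_ac A) k}"

end

theory Submission
  imports Defs
begin

text \<open>For a row \<open>L\<close> and a column \<open>C\<close> put \<open>l = L C\<close>. If \<open>l \<noteq> 0\<close>, every root \<open>t\<close> of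
  \<open>t\<^sup>3 - l (\<lambda> + \<mu>) t - l (f L + g C)\<close> is an eigenvalue of \<open>M\<^sub>L\<^sub>,\<^sub>C\<close>, with eigenvector
  \<open>(l, t C, t\<^sup>2 - \<mu> l)\<close>. Having at most two eigenvalues therefore forces this depressed cubic
  to have a repeated root, i.e. \<open>4 l (\<lambda> + \<mu>)\<^sup>3 = 27 (f L + g C)\<^sup>2\<close>. Rescaling \<open>L\<close> and \<open>C\<close>
  independently turns this into a polynomial identity in the two scalars, which
  forces \<open>\<lambda> + \<mu> = 0\<close> and then, away from characteristic 3, \<open>f L + g C = 0\<close> whenever
  \<open>L C \<noteq> 0\<close>; hence \<open>f = 0\<close> and \<open>g = 0\<close>.\<close>

lemma of_nat_prime_eq_0_iff_CHAR:
  assumes "prime q"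
  shows "(of_nat q :: 'a::idom) = 0 \<longleftrightarrow> CHAR('a) = q"
  using assms CHAR_not_1'[where 'a='a]
  by (auto simp: of_nat_eq_0_iff_char_dvd prime_nat_iff)

lemma alg_closed_depressed_cubic_three_roots:
  fixes P Q :: "'b::alg_closed_field"
  assumes "4 * P ^ 3 + 27 * Q ^ 2 \<noteq> 0"
  shows "\<exists>r1 r2 r3. r1 \<noteq> r2 \<and> r1 \<noteq> r3 \<and> r2 \<noteq> r3 \<and>
     r1 ^ 3 + P * r1 + Q = 0 \<and> r2 ^ 3 + P * r2 + Q = 0 \<and> r3 ^ 3 + P * r3 + Q = 0"
proof -
  obtain r1 where "poly [:Q, P, 0, 1:] r1 = 0"
    using alg_closed_imp_poly_has_root[of "[:Q, P, 0, 1:]"] by auto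
  then have r1: "r1 ^ 3 + P * r1 + Q = 0" by (simp add: algebra_simps power3_eq_cube)
  \<comment> \<open>\<open>t\<^sup>2 + r1 t + r1\<^sup>2 + P\<close> is the quotient of the cubic by \<open>t - r1\<close>\<close>
  obtain r2 where "poly [:r1 ^ 2 + P, r1, 1:] r2 = 0"
    using alg_closed_imp_poly_has_root[of "[:r1 ^ 2 + P, r1, 1:]"] by auto
  then have "r2 ^ 2 + r1 * r2 + r1 ^ 2 + P = 0" by (simp add: algebra_simps power2_eq_square)
  then have P: "P = - (r1 ^ 2 + r1 * r2 + r2 ^ 2)" by (simp add: algebra_simps eq_neg_iff_add_eq_0)
  have Q: "Q = r1 * r2 * (r1 + r2)" using r1 unfolding P
    by (simp add: algebra_simps power2_eq_square power3_eq_cube eq_neg_iff_add_eq_0 add_eq_0_iff2)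
  have "4 * P ^ 3 + 27 * Q ^ 2 = - (((r1 - r2) * (2 * r1 + r2) * (r1 + 2 * r2)) ^ 2)"
    unfolding P Q by (simp add: algebra_simps power2_eq_square power3_eq_cube)
  with assms have "r1 \<noteq> r2" "r1 \<noteq> - r1 - r2" "r2 \<noteq> - r1 - r2" by auto
  with r1 show ?thesis
    by (intro exI[of _ r1] exI[of _ r2] exI[of _ "- r1 - r2"])
      (simp add: P Q algebra_simps power2_eq_square power3_eq_cube)
qed

lemma sum_atLeastLessThan_Suc_Suc_split:
  "(\<Sum>j\<in>{0..<p + 2}. h j) = h 0 + (\<Sum>k<p. h (Suc k)) + h (p + 1)"
proof -
  have "{0..<p + 2} = {..<Suc (Suc p)}" by auto
  then have "(\<Sum>j\<in>{0..<p + 2}. h j) = (\<Sum>j<Suc p. h j) + h (Suc p)" by simp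
  then show ?thesis by (simp only: sum.lessThan_Suc_shift) simp
qed

lemma linear_form_mat_smult:
  "linear_form_mat r s h \<Longrightarrow> A \<in> carrier_mat r s \<Longrightarrow> h (c \<cdot>\<^sub>m A) = c * h A"
  unfolding linear_form_mat_def by blast

lemma linear_form_mat_zero:
  assumes "linear_form_mat r s h"
  shows "h (0\<^sub>m r s) = 0"
proof -
  have "0\<^sub>m r s = (0::'a) \<cdot>\<^sub>m 0\<^sub>m r s" by auto
  then show ?thesis using linear_form_mat_smult[OF assms, of "0\<^sub>m r s" 0] by simp
qed

lemma sum_row_times_unit_col:
  fixes L :: "'a::field mat"
  assumes "L \<in> carrier_mat 1 p" "j < p"
  shows "(\<Sum>k<p. L $$ (0, k) * mat_of_cols p [unit_vec p j] $$ (k, 0)) = L $$ (0, j)"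
proof -
  have "(\<Sum>k<p. L $$ (0, k) * mat_of_cols p [unit_vec p j] $$ (k, 0))
      = (\<Sum>k<p. if k = j then L $$ (0, j) else 0)"
    using assms by (intro sum.cong) (auto simp: mat_of_cols_Cons_index_0)
  then show ?thesis using assms by simp
qed

lemma sum_unit_row_times_col:
  fixes C :: "'a::field mat"
  assumes "C \<in> carrier_mat p 1" "j < p"
  shows "(\<Sum>k<p. mat_of_row (unit_vec p j) $$ (0, k) * C $$ (k, 0)) = C $$ (j, 0)"
proof -
  have "(\<Sum>k<p. mat_of_row (unit_vec p j) $$ (0, k) * C $$ (k, 0))
      = (\<Sum>k<p. if k = j then C $$ (j, 0) else 0)"
    using assms by (intro sum.cong) auto
  then show ?thesis using assms by simp
qed

lemma row_col_pairing_nondegenerate: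
  fixes L C :: "'a::field mat"
  shows "L \<in> carrier_mat 1 p \<Longrightarrow> L \<noteq> 0\<^sub>m 1 p \<Longrightarrow>
      \<exists>C\<in>carrier_mat p 1. (\<Sum>k<p. L $$ (0, k) * C $$ (k, 0)) \<noteq> 0"
    and "C \<in> carrier_mat p 1 \<Longrightarrow> C \<noteq> 0\<^sub>m p 1 \<Longrightarrow>
      \<exists>L\<in>carrier_mat 1 p. (\<Sum>k<p. L $$ (0, k) * C $$ (k, 0)) \<noteq> 0"
proof -
  assume L: "L \<in> carrier_mat 1 p" and "L \<noteq> 0\<^sub>m 1 p"
  then obtain j where "j < p" "L $$ (0, j) \<noteq> 0"
    by (metis (no_types, lifting) carrier_matD eq_matI index_zero_mat less_one zero_carrier_mat)
  then show "\<exists>C\<in>carrier_mat p 1. (\<Sum>k<p. L $$ (0, k) * C $$ (k, 0)) \<noteq> 0"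
    using sum_row_times_unit_col[OF L] by (intro bexI[of _ "mat_of_cols p [unit_vec p j]"]) auto
next
  assume C: "C \<in> carrier_mat p 1" and "C \<noteq> 0\<^sub>m p 1"
  then obtain j where "j < p" "C $$ (j, 0) \<noteq> 0"
    by (metis (no_types, lifting) carrier_matD eq_matI index_zero_mat less_one zero_carrier_mat)
  then show "\<exists>L\<in>carrier_mat 1 p. (\<Sum>k<p. L $$ (0, k) * C $$ (k, 0)) \<noteq> 0"
    using sum_unit_row_times_col[OF C] by (intro bexI[of _ "mat_of_row (unit_vec p j)"]) auto
qed

lemma MLC_eigenvalue_of_cubic_root:
  fixes t :: "'a::field alg_closure"
  assumes L: "L \<in> carrier_mat 1 p" and C: "C \<in> carrier_mat p 1"
    and l: "l = (\<Sum>k<p. L $$ (0, k) * C $$ (k, 0))" and l0: "l \<noteq> 0"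
    and root: "t ^ 3 - to_ac (l * (lam + mu)) * t - to_ac (l * (f L + g C)) = 0"
  shows "eigenvalue (map_mat to_ac (MLC lam mu f g p L C)) t"
proof -
  define M where "M = map_mat to_ac (MLC lam mu f g p L C)"
  define v where "v = vec (p + 2) (\<lambda>i. if i = 0 then to_ac l
    else if i \<le> p then t * to_ac (C $$ (i - 1, 0)) else t ^ 2 - to_ac (mu * l))"
  have M: "M \<in> carrier_mat (p + 2) (p + 2)" and v: "v \<in> carrier_vec (p + 2)"
    unfolding M_def MLC_def v_def by auto
  have "v $ 0 \<noteq> 0" using l0 unfolding v_def by simp
  then have v0: "v \<noteq> 0\<^sub>v (p + 2)" by auto
  have pairing: "(\<Sum>k<p. to_ac (L $$ (0, k)) * (t * to_ac (C $$ (k, 0)))) = t * to_ac l"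
    unfolding l to_ac_sum sum_distrib_left by (simp add: algebra_simps)
  have "M *\<^sub>v v = t \<cdot>\<^sub>v v"
  proof (rule eq_vecI)
    show "dim_vec (M *\<^sub>v v) = dim_vec (t \<cdot>\<^sub>v v)" using M v by simp
    fix i assume "i < dim_vec (t \<cdot>\<^sub>v v)"
    then have i: "i < p + 2" using v by simp
    have "(M *\<^sub>v v) $ i = (\<Sum>j\<in>{0..<p + 2}. M $$ (i, j) * v $ j)"
      using i M v by (simp add: mult_mat_vec_def scalar_prod_def)
    also note sum_atLeastLessThan_Suc_Suc_split
    finally have Mv: "(M *\<^sub>v v) $ i = M $$ (i, 0) * v $ 0
        + (\<Sum>k<p. M $$ (i, Suc k) * v $ Suc k) + M $$ (i, p + 1) * v $ (p + 1)" .
    consider "i = 0" | "0 < i" "i \<le> p" | "i = p + 1" using i by linarith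
    then show "(M *\<^sub>v v) $ i = (t \<cdot>\<^sub>v v) $ i"
    proof cases
      case 1
      then have "(M *\<^sub>v v) $ i = (\<Sum>k<p. to_ac (L $$ (0, k)) * (t * to_ac (C $$ (k, 0))))"
        unfolding Mv by (auto simp: M_def MLC_def v_def intro!: sum.cong)
      then show ?thesis using pairing 1 v unfolding v_def by (simp add: algebra_simps)
    next
      case 2
      then have "(M *\<^sub>v v) $ i = to_ac (mu * C $$ (i - 1, 0)) * to_ac l
          + to_ac (C $$ (i - 1, 0)) * (t ^ 2 - to_ac (mu * l))"
        unfolding Mv by (auto simp: M_def MLC_def v_def)
      then show ?thesis using 2 i unfolding v_def by (simp add: algebra_simps power2_eq_square)
    next
      case 3
      then have "(M *\<^sub>v v) $ i = to_ac (f L + g C) * to_ac l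
          + (\<Sum>k<p. to_ac lam * (to_ac (L $$ (0, k)) * (t * to_ac (C $$ (k, 0)))))"
        unfolding Mv by (auto simp: M_def MLC_def v_def algebra_simps intro!: sum.cong)
      also have "\<dots> = to_ac (f L + g C) * to_ac l + to_ac lam * (t * to_ac l)"
        by (simp only: pairing flip: sum_distrib_left)
      finally show ?thesis using 3 root v unfolding v_def
        by (simp add: algebra_simps power2_eq_square power3_eq_cube)
    qed
  qed
  then have "eigenvector M v t" unfolding eigenvector_def using M v v0 by simp
  then show ?thesis unfolding M_def eigenvalue_def by blast
qed

definition at_most_two_eigenvalues :: "'a::field mat \<Rightarrow> bool" where
  "at_most_two_eigenvalues A \<longleftrightarrow> finite (eigenvalues_ac A) \<and> card (eigenvalues_ac A) \<le> 2"

lemma MLC_discriminant_vanishes: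
  fixes lam mu :: "'a::field"
  assumes spec: "at_most_two_eigenvalues (MLC lam mu f g p L C)"
    and L: "L \<in> carrier_mat 1 p" and C: "C \<in> carrier_mat p 1"
    and l0: "(\<Sum>k<p. L $$ (0, k) * C $$ (k, 0)) \<noteq> 0"
  shows "4 * (\<Sum>k<p. L $$ (0, k) * C $$ (k, 0)) * (lam + mu) ^ 3 = 27 * (f L + g C) ^ 2"
proof (rule ccontr)
  define l where "l = (\<Sum>k<p. L $$ (0, k) * C $$ (k, 0))"
  define P where "P = to_ac (- (l * (lam + mu)))"
  define Q where "Q = to_ac (- (l * (f L + g C)))"
  assume "4 * (\<Sum>k<p. L $$ (0, k) * C $$ (k, 0)) * (lam + mu) ^ 3 \<noteq> 27 * (f L + g C) ^ 2"
  then have "to_ac (l ^ 2 * (27 * (f L + g C) ^ 2 - 4 * l * (lam + mu) ^ 3)) \<noteq> 0"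
    using l0 unfolding l_def to_ac_eq_0_iff by simp
  also have "to_ac (l ^ 2 * (27 * (f L + g C) ^ 2 - 4 * l * (lam + mu) ^ 3)) = 4 * P ^ 3 + 27 * Q ^ 2"
    unfolding P_def Q_def by (simp add: algebra_simps power2_eq_square power3_eq_cube)
  finally obtain r1 r2 r3 where r: "r1 \<noteq> r2" "r1 \<noteq> r3" "r2 \<noteq> r3"
    "r1 ^ 3 + P * r1 + Q = 0" "r2 ^ 3 + P * r2 + Q = 0" "r3 ^ 3 + P * r3 + Q = 0"
    using alg_closed_depressed_cubic_three_roots by blast
  have "eigenvalue (map_mat to_ac (MLC lam mu f g p L C)) t" if "t ^ 3 + P * t + Q = 0" for t
    by (rule MLC_eigenvalue_of_cubic_root[OF L C l_def l0[folded l_def]])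
      (use that in \<open>simp add: P_def Q_def algebra_simps\<close>)
  then have "{r1, r2, r3} \<subseteq> eigenvalues_ac (MLC lam mu f g p L C)"
    using r unfolding eigenvalues_ac_def by auto
  from card_mono[OF _ this] have "card {r1, r2, r3} \<le> 2"
    using spec unfolding at_most_two_eigenvalues_def by auto
  with r show False by auto
qed

lemma MLC_discriminant_vanishes_scaled:
  fixes lam mu :: "'a::field"
  assumes spec: "\<forall>L\<in>carrier_mat 1 p. \<forall>C\<in>carrier_mat p 1.
      at_most_two_eigenvalues (MLC lam mu f g p L C)"
    and f: "linear_form_mat 1 p f" and g: "linear_form_mat p 1 g"
    and L: "L \<in> carrier_mat 1 p" and C: "C \<in> carrier_mat p 1"
    and l0: "(\<Sum>k<p. L $$ (0, k) * C $$ (k, 0)) \<noteq> 0" and "x \<noteq> 0" "y \<noteq> 0"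
  shows "4 * (x * y * (\<Sum>k<p. L $$ (0, k) * C $$ (k, 0))) * (lam + mu) ^ 3
    = 27 * (x * f L + y * g C) ^ 2"
proof -
  have xL: "x \<cdot>\<^sub>m L \<in> carrier_mat 1 p" and yC: "y \<cdot>\<^sub>m C \<in> carrier_mat p 1"
    using L C by auto
  have "(\<Sum>k<p. (x \<cdot>\<^sub>m L) $$ (0, k) * (y \<cdot>\<^sub>m C) $$ (k, 0))
      = (\<Sum>k<p. x * y * (L $$ (0, k) * C $$ (k, 0)))"
    using L C by (intro sum.cong) auto
  also have "\<dots> = x * y * (\<Sum>k<p. L $$ (0, k) * C $$ (k, 0))"
    by (simp add: sum_distrib_left)
  finally have "4 * (x * y * (\<Sum>k<p. L $$ (0, k) * C $$ (k, 0))) * (lam + mu) ^ 3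
      = 27 * (f (x \<cdot>\<^sub>m L) + g (y \<cdot>\<^sub>m C)) ^ 2"
    using MLC_discriminant_vanishes[OF bspec[OF bspec[OF spec xL] yC] xL yC] l0 assms(7,8)
    by simp
  moreover have "f (x \<cdot>\<^sub>m L) = x * f L" "g (y \<cdot>\<^sub>m C) = y * g C"
    using linear_form_mat_smult f g L C by blast+
  ultimately show ?thesis by simp
qed

lemma eq_0_if_discriminant_vanishes_on_scalings:
  fixes s a b :: "'a::field"
  assumes two: "(2::'a) \<noteq> 0"
    and disc: "\<And>x y. x \<noteq> 0 \<Longrightarrow> y \<noteq> 0 \<Longrightarrow> 4 * (x * y) * s ^ 3 = 27 * (x * a + y * b) ^ 2"
  shows "s = 0"
proof -
  have four: "(4::'a) \<noteq> 0" using two by (metis mult_2_right numeral_Bit0 mult_eq_0_iff)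
  have "(27::'a) = 3 * 3 * 3" by simp
  then have t27: "(27::'a) = 0 \<longleftrightarrow> (3::'a) = 0" by (metis mult_eq_0_iff)
  have disc11: "4 * s ^ 3 = 27 * (a + b) ^ 2" using disc[of 1 1] by simp
  have "4 * s ^ 3 = 0"
  proof (cases "(3::'a) = 0")
    case True
    then show ?thesis using disc11 t27 by simp
  next
    case False
    have disc21: "8 * s ^ 3 = 27 * (2 * a + b) ^ 2" using disc[of 2 1] two by simp
    have disc12: "8 * s ^ 3 = 27 * (a + 2 * b) ^ 2" using disc[of 1 2] two by simp
    have "27 * (2 * a ^ 2 - b ^ 2) = 27 * (2 * a + b) ^ 2 - 2 * (27 * (a + b) ^ 2)"
      by (simp add: algebra_simps power2_eq_square)
    also have "\<dots> = 0" unfolding disc21[symmetric] disc11[symmetric] by simp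
    finally have "2 * a ^ 2 - b ^ 2 = 0" using False t27 by (metis mult_eq_0_iff)
    then have ab: "b ^ 2 = 2 * a ^ 2" by simp
    have "27 * (2 * b ^ 2 - a ^ 2) = 27 * (a + 2 * b) ^ 2 - 2 * (27 * (a + b) ^ 2)"
      by (simp add: algebra_simps power2_eq_square)
    also have "\<dots> = 0" unfolding disc12[symmetric] disc11[symmetric] by simp
    finally have "2 * b ^ 2 - a ^ 2 = 0" using False t27 by (metis mult_eq_0_iff)
    then have ba: "a ^ 2 = 2 * b ^ 2" by simp
    have "3 * b ^ 2 = 2 * (2 * b ^ 2) - b ^ 2" by (simp add: algebra_simps)
    also have "\<dots> = 0" by (subst ba[symmetric]) (simp add: ab)
    finally have "3 * b ^ 2 = 0" .
    with False ba have "a = 0" "b = 0" by simp_all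
    then show ?thesis using disc11 by simp
  qed
  with four show ?thesis by simp
qed

lemma MLC_linear_forms_vanish_on_nondegenerate_pairs:
  fixes lam mu :: "'a::field"
  assumes spec: "\<forall>L\<in>carrier_mat 1 p. \<forall>C\<in>carrier_mat p 1.
      at_most_two_eigenvalues (MLC lam mu f g p L C)"
    and f: "linear_form_mat 1 p f" and g: "linear_form_mat p 1 g"
    and L: "L \<in> carrier_mat 1 p" and C: "C \<in> carrier_mat p 1"
    and l0: "(\<Sum>k<p. L $$ (0, k) * C $$ (k, 0)) \<noteq> 0"
    and "lam + mu = 0" and "(2::'a) \<noteq> 0" and "(3::'a) \<noteq> 0"
  shows "f L = 0 \<and> g C = 0"
proof -
  have "(27::'a) = 3 * 3 * 3" by simp
  then have "(27::'a) \<noteq> 0" using \<open>(3::'a) \<noteq> 0\<close> by (metis mult_eq_0_iff)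
  then have sum0: "f L + y * g C = 0" if "y \<noteq> 0" for y
    using MLC_discriminant_vanishes_scaled[OF spec f g L C l0 one_neq_zero that] \<open>lam + mu = 0\<close>
    by simp
  have "g C = (f L + 2 * g C) - (f L + 1 * g C)" by simp
  also have "\<dots> = 0" unfolding sum0[OF \<open>(2::'a) \<noteq> 0\<close>] sum0[OF one_neq_zero] by simp
  finally show ?thesis using sum0[of 1] by simp
qed

lemma linear_forms_vanish_if_vanish_on_nondegenerate_pairs:
  fixes f g :: "'a::field mat \<Rightarrow> 'a"
  assumes f: "linear_form_mat 1 p f" and g: "linear_form_mat p 1 g"
    and vanish: "\<And>L C. L \<in> carrier_mat 1 p \<Longrightarrow> C \<in> carrier_mat p 1 \<Longrightarrow>
      (\<Sum>k<p. L $$ (0, k) * C $$ (k, 0)) \<noteq> 0 \<Longrightarrow> f L = 0 \<and> g C = 0"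
  shows "(\<forall>L\<in>carrier_mat 1 p. f L = 0) \<and> (\<forall>C\<in>carrier_mat p 1. g C = 0)"
proof safe
  fix L :: "'a mat" assume L: "L \<in> carrier_mat 1 p"
  show "f L = 0"
  proof (cases "L = 0\<^sub>m 1 p")
    case False
    with row_col_pairing_nondegenerate(1)[OF L] vanish[OF L] show ?thesis by blast
  qed (use linear_form_mat_zero[OF f] in simp)
next
  fix C :: "'a mat" assume C: "C \<in> carrier_mat p 1"
  show "g C = 0"
  proof (cases "C = 0\<^sub>m p 1")
    case False
    with row_col_pairing_nondegenerate(2)[OF C] vanish[OF _ C] show ?thesis by blast
  qed (use linear_form_mat_zero[OF g] in simp)
qed

theorem mainTheorem16:
  fixes lam mu :: "'a::field" and f g :: "'a mat \<Rightarrow> 'a" and p :: nat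
  assumes "CHAR('a) \<noteq> 2"
    and "p \<ge> 1"
    and "linear_form_mat 1 p f"
    and "linear_form_mat p 1 g"
    and "\<forall>L\<in>carrier_mat 1 p. \<forall>C\<in>carrier_mat p 1.
           finite (eigenvalues_ac (MLC lam mu f g p L C)) \<and>
           card (eigenvalues_ac (MLC lam mu f g p L C)) \<le> 2"
  shows "lam + mu = 0 \<and>
         (CHAR('a) \<noteq> 3 \<longrightarrow> (\<forall>L\<in>carrier_mat 1 p. f L = 0) \<and> (\<forall>C\<in>carrier_mat p 1. g C = 0))"
proof -
  have two: "(2::'a) \<noteq> 0" using assms(1) of_nat_prime_eq_0_iff_CHAR[of 2, where 'a='a] by simp
  have spec: "\<forall>L\<in>carrier_mat 1 p. \<forall>C\<in>carrier_mat p 1.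
      at_most_two_eigenvalues (MLC lam mu f g p L C)"
    using assms(5) unfolding at_most_two_eigenvalues_def .
  let ?e = "mat_of_row (unit_vec p 0) :: 'a mat" and ?e' = "mat_of_cols p [unit_vec p 0] :: 'a mat"
  have e: "?e \<in> carrier_mat 1 p" "?e' \<in> carrier_mat p 1"
    and "(\<Sum>k<p. ?e $$ (0, k) * ?e' $$ (k, 0)) = 1"
    using assms(2) sum_row_times_unit_col[of ?e p 0] by auto
  with MLC_discriminant_vanishes_scaled[OF spec assms(3,4) e]
  have "lam + mu = 0"
    by (intro eq_0_if_discriminant_vanishes_on_scalings[OF two, where a = "f ?e" and b = "g ?e'"]) simp
  moreover have "(\<forall>L\<in>carrier_mat 1 p. f L = 0) \<and> (\<forall>C\<in>carrier_mat p 1. g C = 0)"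
    if "CHAR('a) \<noteq> 3"
    using that of_nat_prime_eq_0_iff_CHAR[of 3, where 'a='a]
      MLC_linear_forms_vanish_on_nondegenerate_pairs[OF spec assms(3,4) _ _ _ \<open>lam + mu = 0\<close> two]
    by (intro linear_forms_vanish_if_vanish_on_nondegenerate_pairs[OF assms(3,4)]) simp
  ultimately show ?thesis by blast
qed

end
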